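(* Let $\Pi=(\mathsf A,\mathsf B)$ be a protocol with $\mathrm{val}(\Pi)<1$. Then $\mathrm{Best}_{\mathsf B}\big(\Pi|_{M^{\mathsf A}_\Pi}\big)=1$.
   Context: An $m$-round single-bit-message protocol $\Pi$ is identified with the complete binary tree of height $m$ (nodes: binary strings of length $\le m$, root $\lambda$), with a control scheme, edge probabilities $e_\Pi(u,ub)$, common output $\chi_\Pi:\text{leaves}\to\{0,1\}$, node-visit probabilities $v_\Pi(u)$, leaf distribution $L_\Pi$ and value $\mathrm{val}(\Pi)=\mathbb E_{L_\Pi}[\chi_\Pi]$. For a node $u$ with $v_\Pi(u)>0$, $\Pi_u$ is the protocol on the subtree rooted at $u$ (conditioned on prefix $u$); otherwise $\Pi_u=\perp$, and expectations over $L_\perp$ are $0$. For a measure $M:\text{leaves}\to[0,1]$, $\mathbb E_{L_{\Pi_u}}[M]$ denotes the expectation of $M$ restricted to leaves under $u$. The $\mathsf A$-dominated measure $M^{\mathsf A}_\Pi$: if $\Pi$ has $0$ rounds with single leaf $\ell$, $M^{\mathsf A}_\Pi(\ell)=\chi_\Pi(\ell)$; otherwise, for a leaf $\ell$ with first bit $b$, writing $\mu_c=\mathbb E_{L_{\Pi_c}}[M^{\mathsf A}_{\Pi_c}]$: $M^{\mathsf A}_\Pi(\ell)=0$ if $e_\Pi(\lambda,b)=0$; $=M^{\mathsf A}_{\Pi_b}(\ell)$ if $e_\Pi(\lambda,b)=1$, or if $e_\Pi(\lambda,b)\in(0,1)$ and ($\mathsf A$ controls the root or $\mu_b\le\mu_{1-b}$);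 $=\frac{\mu_{1-b}}{\mu_b}M^{\mathsf A}_{\Pi_b}(\ell)$ otherwise. Conditional protocol: for $M$ with $\mathbb E_{L_\Pi}[M]<1$, $\Pi|_M$ has the same control scheme and output function as $\Pi$, and edge distribution $e_{\Pi|_M}(u,ub)=0$ if $\mathbb E_{L_{\Pi_u}}[M]=1$, and $e_{\Pi|_M}(u,ub)=e_\Pi(u,ub)\cdot\frac{1-\mathbb E_{L_{\Pi_{ub}}}[M]}{1-\mathbb E_{L_{\Pi_u}}[M]}$ otherwise. A deterministic strategy $\mathsf B'$ for $\mathsf B$ in a protocol $\Pi'$ is valid if $v_{\Pi'}(u)=0\Rightarrow v_{(\mathsf A,\mathsf B')}(u)=0$; $\mathrm{Best}_{\mathsf B}(\Pi')=\max_{\text{valid }\mathsf B'}(1-\mathrm{val}(\mathsf A,\mathsf B'))$. *)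

theory Defs
  imports Main "HOL-Library.Extended_Real"
begin

text \<open>An m-round single-bit-message protocol: nodes are bool lists of length at most m,
  the root is the empty list, leaves are lists of length exactly m.
  ctrl gives the control scheme, edge u b is the probability of the edge from u to u@[b],
  out is the common output on leaves.\<close>

datatype party = PA | PB

record proto =
  rounds :: nat
  ctrl :: "bool list \<Rightarrow> party"
  edge :: "bool list \<Rightarrow> bool \<Rightarrow> real"
  out :: "bool list \<Rightarrow> bool"

definition wf_proto :: "proto \<Rightarrow> bool" where
  "wf_proto P \<longleftrightarrow> (\<forall>u. length u < rounds P \<longrightarrow>
      (\<forall>b. 0 \<le> edge P u b) \<and> edge P u True + edge P u False = 1)"

definition visit :: "proto \<Rightarrow> bool list \<Rightarrow> real" where
  "visit P u = (\<Prod>i<length u. edge P (take i u) (u ! i))"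

definition cpath :: "proto \<Rightarrow> bool list \<Rightarrow> bool list \<Rightarrow> real" where
  "cpath P u w = (\<Prod>i<length w. edge P (u @ take i w) (w ! i))"

text \<open>expectation of M over the leaves under u, w.r.t. the subprotocol rooted at u
  (ignoring whether that subprotocol is bottom)\<close>
definition exp_from :: "proto \<Rightarrow> bool list \<Rightarrow> (bool list \<Rightarrow> real) \<Rightarrow> real" where
  "exp_from P u M = (\<Sum>w\<in>{w. length w = rounds P - length u}. cpath P u w * M (u @ w))"

text \<open>E_{L_{Pi_u}}[M], which is 0 when Pi_u = bottom (v(u) = 0)\<close>
definition exp_at :: "proto \<Rightarrow> bool list \<Rightarrow> (bool list \<Rightarrow> real) \<Rightarrow> real" where
  "exp_at P u M = (if visit P u > 0 then exp_from P u M else 0)"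

definition val :: "proto \<Rightarrow> real" where
  "val P = exp_at P [] (\<lambda>l. of_bool (out P l))"

text \<open>A-dominated measure of the subprotocol rooted at node u with k remaining rounds,
  evaluated at a leaf l (extending u).\<close>
primrec mdomk :: "proto \<Rightarrow> nat \<Rightarrow> bool list \<Rightarrow> bool list \<Rightarrow> real" where
  "mdomk P 0 u l = of_bool (out P l)"
| "mdomk P (Suc k) u l =
     (let b = l ! length u;
          mu = (\<lambda>c. if edge P u c = 0 then 0
                     else (\<Sum>w\<in>{w. length w = k}. cpath P (u @ [c]) w * mdomk P k (u @ [c]) (u @ [c] @ w)))
      in if edge P u b = 0 then 0
         else if edge P u b = 1 then mdomk P k (u @ [b]) l
         else if ctrl P u = PA \<or> mu b \<le> mu (\<not> b) then mdomk P k (u @ [b]) l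
         else (mu (\<not> b) / mu b) * mdomk P k (u @ [b]) l)"

definition mdomA :: "proto \<Rightarrow> bool list \<Rightarrow> real" where
  "mdomA P l = mdomk P (rounds P) [] l"

definition cond_proto :: "proto \<Rightarrow> (bool list \<Rightarrow> real) \<Rightarrow> proto" where
  "cond_proto P M = P\<lparr> edge := (\<lambda>u b. if exp_at P u M = 1 then 0
       else edge P u b * (1 - exp_at P (u @ [b]) M) / (1 - exp_at P u M)) \<rparr>"

text \<open>Execution of (A, B') in protocol P: A plays according to the protocol edges,
  B plays the deterministic strategy B'.\<close>
definition visitAB :: "proto \<Rightarrow> (bool list \<Rightarrow> bool) \<Rightarrow> bool list \<Rightarrow> real" where
  "visitAB P B' u = (\<Prod>i<length u.
       if ctrl P (take i u) = PA then edge P (take i u) (u ! i)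
       else of_bool (B' (take i u) = u ! i))"

definition valAB :: "proto \<Rightarrow> (bool list \<Rightarrow> bool) \<Rightarrow> real" where
  "valAB P B' = (\<Sum>l\<in>{l. length l = rounds P}. visitAB P B' l * of_bool (out P l))"

definition valid_B :: "proto \<Rightarrow> (bool list \<Rightarrow> bool) \<Rightarrow> bool" where
  "valid_B P B' \<longleftrightarrow> (\<forall>u. length u \<le> rounds P \<longrightarrow> visit P u = 0 \<longrightarrow> visitAB P B' u = 0)"

definition BestB :: "proto \<Rightarrow> real" where
  "BestB P = Max {1 - valAB P B' | B'. valid_B P B'}"

end

theory Submission
  imports Defs
begin

text \<open>B plays greedily: at each of its nodes it moves to the child whose subtree carries the
  smaller A-dominated mass \<mu>. In M^A that child is not rescaled, while the heavier child is
  scaled down to the lighter one's mass, so the mass of the node equals the mass of the chosen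
  child; at A's nodes no child is rescaled at all. Hence along every path that (A, B) can follow
  in \<Pi>|_M, with M = M^A_\<Pi>, all scaling factors are 1 and E_{L_{\<Pi>_u}}[M] equals the
  A-dominated mass of \<Pi>_u. This conditional mass starts at E[M] \<le> val \<Pi> < 1, stays below 1
  at B's nodes, and A's conditional edges lead only to children where it is below 1 (the others
  get probability 0). At a reachable leaf l the mass is M(l) = \<chi>(l) < 1, so \<chi>(l) = 0 and B wins
  with probability 1.\<close>

lemma prod_prefixes_snoc:
  "(\<Prod>i<length (u @ [b]). g (take i (u @ [b])) ((u @ [b]) ! i))
     = (\<Prod>i<length u. g (take i u) (u ! i)) * g u b"
  by (auto simp: nth_append intro!: prod.cong)

lemma visit_snoc: "visit P (u @ [b]) = visit P u * edge P u b"
  unfolding visit_def by (rule prod_prefixes_snoc)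

lemma visitAB_snoc:
  "visitAB P B (u @ [b]) =
     visitAB P B u * (if ctrl P u = PA then edge P u b else of_bool (B u = b))"
  unfolding visitAB_def by (rule prod_prefixes_snoc)

lemma cpath_Cons: "cpath P u (c # w) = edge P u c * cpath P (u @ [c]) w"
  unfolding cpath_def length_Cons prod.lessThan_Suc_shift by simp

lemma finite_lists_length: "finite {w :: bool list. length w = k}"
  using finite_lists_length_eq[of "UNIV :: bool set" k] by simp

lemma sum_lists_length_Suc:
  "(\<Sum>w\<in>{w :: bool list. length w = Suc k}. F w) =
     (\<Sum>w\<in>{w. length w = k}. F (True # w)) + (\<Sum>w\<in>{w. length w = k}. F (False # w))"
proof -
  have "{w :: bool list. length w = Suc k} =
      Cons True ` {w. length w = k} \<union> Cons False ` {w. length w = k}"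
    by (auto simp: length_Suc_conv image_iff)
  then have "(\<Sum>w\<in>{w :: bool list. length w = Suc k}. F w) =
      (\<Sum>w\<in>Cons True ` {w. length w = k}. F w) + (\<Sum>w\<in>Cons False ` {w. length w = k}. F w)"
    by (simp only:) (rule sum.union_disjoint, auto simp: finite_lists_length)
  then show ?thesis
    by (simp add: sum.reindex)
qed

lemma exp_from_Suc:
  assumes "length u < rounds P"
  shows "exp_from P u f =
    edge P u True * exp_from P (u @ [True]) f + edge P u False * exp_from P (u @ [False]) f"
proof -
  have "rounds P - length u = Suc (rounds P - length (u @ [True]))"
    and "rounds P - length (u @ [False]) = rounds P - length (u @ [True])"
    using assms by simp_all
  then show ?thesis
    unfolding exp_from_def
    by (simp only: sum_lists_length_Suc) (simp add: cpath_Cons sum_distrib_left mult.assoc)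
qed

context
  fixes P :: proto
  assumes wf: "wf_proto P"
begin

lemma edge_nonneg: "length u < rounds P \<Longrightarrow> 0 \<le> edge P u b"
  using wf unfolding wf_proto_def by blast

lemma edge_sum: "length u < rounds P \<Longrightarrow> edge P u True + edge P u False = 1"
  using wf unfolding wf_proto_def by blast

lemma cpath_nonneg: "length u + length w \<le> rounds P \<Longrightarrow> 0 \<le> cpath P u w"
  unfolding cpath_def by (auto intro!: prod_nonneg edge_nonneg)

lemma sum_cpath: "length u + k \<le> rounds P \<Longrightarrow> (\<Sum>w\<in>{w. length w = k}. cpath P u w) = 1"
proof (induction k arbitrary: u)
  case 0
  then show ?case by (simp add: cpath_def)
next
  case (Suc k)
  have "(\<Sum>w\<in>{w. length w = Suc k}. cpath P u w) =
      edge P u True * (\<Sum>w\<in>{w. length w = k}. cpath P (u @ [True]) w) +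
      edge P u False * (\<Sum>w\<in>{w. length w = k}. cpath P (u @ [False]) w)"
    by (simp add: sum_lists_length_Suc cpath_Cons sum_distrib_left)
  then show ?case
    using Suc.IH[of "u @ [True]"] Suc.IH[of "u @ [False]"] Suc.prems edge_sum by simp
qed

lemma exp_from_mono:
  assumes "length u \<le> rounds P" and "\<And>l. f l \<le> g l"
  shows "exp_from P u f \<le> exp_from P u g"
  unfolding exp_from_def
  using assms cpath_nonneg by (auto intro!: sum_mono mult_left_mono)

lemma exp_from_le_1:
  assumes "length u \<le> rounds P" and "\<And>l. f l \<le> 1"
  shows "exp_from P u f \<le> 1"
  using exp_from_mono[OF assms] sum_cpath assms(1) by (simp add: exp_from_def)

lemma exp_at_le_1: "length u \<le> rounds P \<Longrightarrow> (\<And>l. f l \<le> 1) \<Longrightarrow> exp_at P u f \<le> 1"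
  unfolding exp_at_def using exp_from_le_1 by simp

end

text \<open>dom_mass is the quantity \<mu>_c in the definition of mdomk, and dom_factor the factor by
  which mdomk rescales the measure below the child u @ [b].\<close>

definition dom_mass :: "proto \<Rightarrow> nat \<Rightarrow> bool list \<Rightarrow> bool \<Rightarrow> real" where
  "dom_mass P k u c = (if edge P u c = 0 then 0
     else (\<Sum>w\<in>{w. length w = k}. cpath P (u @ [c]) w * mdomk P k (u @ [c]) (u @ [c] @ w)))"

definition dom_factor :: "proto \<Rightarrow> nat \<Rightarrow> bool list \<Rightarrow> bool \<Rightarrow> real" where
  "dom_factor P k u b = (if edge P u b = 0 then 0 else if edge P u b = 1 then 1
     else if ctrl P u = PA \<or> dom_mass P k u b \<le> dom_mass P k u (\<not> b) then 1
     else dom_mass P k u (\<not> b) / dom_mass P k u b)"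

lemma mdomk_Suc_factor:
  "mdomk P (Suc k) u l = dom_factor P k u (l ! length u) * mdomk P k (u @ [l ! length u]) l"
  by (simp add: Let_def dom_factor_def dom_mass_def)

lemma dom_factor_bounds:
  "0 \<le> dom_mass P k u b \<Longrightarrow> 0 \<le> dom_mass P k u (\<not> b) \<Longrightarrow>
     0 \<le> dom_factor P k u b \<and> dom_factor P k u b \<le> 1"
  unfolding dom_factor_def by (auto simp: divide_simps)

text \<open>node_mass P u is the paper's E_{L_{\<Pi>_u}}[M^A_{\<Pi>_u}], without the guard v(u) > 0
  built into exp_at.\<close>

definition node_mass :: "proto \<Rightarrow> bool list \<Rightarrow> real" where
  "node_mass P u = exp_from P u (mdomk P (rounds P - length u) u)"

lemma dom_mass_eq_node_mass:
  "length u < rounds P \<Longrightarrow>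
     dom_mass P (rounds P - length u - 1) u c = (if edge P u c = 0 then 0 else node_mass P (u @ [c]))"
  unfolding dom_mass_def node_mass_def exp_from_def by simp

lemma node_mass_Suc:
  assumes "length u < rounds P"
  defines "k \<equiv> rounds P - length u - 1"
  shows "node_mass P u =
    edge P u True * dom_factor P k u True * node_mass P (u @ [True]) +
    edge P u False * dom_factor P k u False * node_mass P (u @ [False])"
proof -
  have rounds_u: "rounds P - length u = Suc k" and rounds_uc: "rounds P - length (u @ [c]) = k" for c
    using assms by simp_all
  have "exp_from P (u @ [c]) (mdomk P (Suc k) u) = dom_factor P k u c * node_mass P (u @ [c])" for c
    unfolding node_mass_def exp_from_def rounds_uc sum_distrib_left
    by (rule sum.cong) (auto simp del: mdomk.simps(2) simp: mdomk_Suc_factor nth_append)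
  then show ?thesis
    using exp_from_Suc[OF assms(1), of "mdomk P (Suc k) u"] by (simp add: node_mass_def rounds_u)
qed

lemma node_mass_leaf: "length l = rounds P \<Longrightarrow> node_mass P l = of_bool (out P l)"
  by (simp add: node_mass_def exp_from_def cpath_def)

context
  fixes P :: proto
  assumes wf: "wf_proto P"
begin

lemma mdomk_bounds:
  "length u + k \<le> rounds P \<Longrightarrow> 0 \<le> mdomk P k u l \<and> mdomk P k u l \<le> of_bool (out P l)"
proof (induction k arbitrary: u l)
  case 0
  then show ?case by simp
next
  case (Suc k)
  define b where "b = l ! length u"
  have "0 \<le> dom_mass P k u c" for c
    unfolding dom_mass_def using Suc.IH[of "u @ [c]"] Suc.prems wf
    by (auto intro!: sum_nonneg mult_nonneg_nonneg cpath_nonneg)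
  then have "0 \<le> dom_factor P k u b \<and> dom_factor P k u b \<le> 1"
    using dom_factor_bounds by blast
  moreover have "0 \<le> mdomk P k (u @ [b]) l \<and> mdomk P k (u @ [b]) l \<le> of_bool (out P l)"
    using Suc.IH[of "u @ [b]"] Suc.prems by simp
  ultimately show ?case
    unfolding mdomk_Suc_factor b_def[symmetric] by (auto intro: mult_le_one mult_nonneg_nonneg)
qed

lemma mdomA_bounds: "0 \<le> mdomA P l \<and> mdomA P l \<le> of_bool (out P l)"
  unfolding mdomA_def using mdomk_bounds by simp

lemma exp_mdomA_le_val: "exp_from P [] (mdomA P) \<le> val P"
proof -
  have "exp_from P [] (mdomA P) \<le> exp_from P [] (\<lambda>l. of_bool (out P l))"
    using exp_from_mono[OF wf] mdomA_bounds by simp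
  then show ?thesis
    by (simp add: val_def exp_at_def visit_def)
qed

lemma node_mass_nonneg: "length u \<le> rounds P \<Longrightarrow> 0 \<le> node_mass P u"
  unfolding node_mass_def exp_from_def using wf
  by (intro sum_nonneg mult_nonneg_nonneg) (auto intro: cpath_nonneg mdomk_bounds[THEN conjunct1])

lemma dom_factor_PB:
  assumes "length u < rounds P" and "ctrl P u = PB"
    and "0 < edge P u True" and "0 < edge P u False"
  shows "dom_factor P (rounds P - length u - 1) u b =
    (if node_mass P (u @ [b]) \<le> node_mass P (u @ [\<not> b]) then 1
     else node_mass P (u @ [\<not> b]) / node_mass P (u @ [b]))"
proof -
  have "edge P u True + edge P u False = 1"
    using edge_sum[OF wf assms(1)] .
  then have "edge P u c \<noteq> 0" "edge P u c \<noteq> 1" for c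
    using assms(3,4) by (cases c; simp)+
  then show ?thesis
    unfolding dom_factor_def dom_mass_eq_node_mass[OF assms(1)] using assms(2) by simp
qed

lemma node_mass_PB:
  assumes "length u < rounds P" and "ctrl P u = PB"
    and "0 < edge P u True" and "0 < edge P u False"
  shows "node_mass P u = min (node_mass P (u @ [True])) (node_mass P (u @ [False]))"
proof -
  define x y where "x = node_mass P (u @ [True])" and "y = node_mass P (u @ [False])"
  have "0 \<le> x" "0 \<le> y"
    unfolding x_def y_def using node_mass_nonneg assms(1) by simp_all
  moreover have "node_mass P u =
      edge P u True * (if x \<le> y then 1 else y / x) * x +
      edge P u False * (if y \<le> x then 1 else x / y) * y"
    using node_mass_Suc[OF assms(1)] dom_factor_PB[OF assms] unfolding x_def y_def by simp
  ultimately have "node_mass P u = (edge P u True + edge P u False) * min x y"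
    by (auto simp: min_def algebra_simps)
  then show ?thesis
    using edge_sum[OF wf assms(1)] unfolding x_def y_def by simp
qed

end

definition greedyB :: "proto \<Rightarrow> bool list \<Rightarrow> bool" where
  "greedyB P u = (if edge P u True = 0 then False else if edge P u False = 0 then True
     else node_mass P (u @ [True]) \<le> node_mass P (u @ [False]))"

lemma greedyB_step:
  assumes wf: "wf_proto P" and "length u < rounds P" and "ctrl P u = PB"
  defines "b \<equiv> greedyB P u"
  shows "0 < edge P u b \<and> dom_factor P (rounds P - length u - 1) u b = 1
    \<and> node_mass P (u @ [b]) = node_mass P u"
proof -
  have sum: "edge P u True + edge P u False = 1"
    and "0 \<le> edge P u True" "0 \<le> edge P u False"
    using edge_sum edge_nonneg wf assms(2) by blast+
  then consider "edge P u True = 0" | "edge P u False = 0" | "0 < edge P u True" "0 < edge P u False"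
    by force
  then show ?thesis
  proof cases
    case 3
    then show ?thesis
      using dom_factor_PB[OF wf assms(2,3) 3] node_mass_PB[OF wf assms(2,3) 3]
      unfolding b_def greedyB_def by (auto simp: min_def)
  qed (use sum node_mass_Suc[OF assms(2)] in \<open>simp add: b_def greedyB_def dom_factor_def\<close>)+
qed

definition unscaled :: "proto \<Rightarrow> bool list \<Rightarrow> bool" where
  "unscaled P u \<longleftrightarrow> (\<forall>w. length w = rounds P - length u \<longrightarrow>
     mdomA P (u @ w) = mdomk P (rounds P - length u) u (u @ w))"

lemma unscaled_Nil: "unscaled P []"
  unfolding unscaled_def mdomA_def by simp

lemma unscaled_snoc:
  assumes "unscaled P u" and "length u < rounds P"
    and "dom_factor P (rounds P - length u - 1) u b = 1"
  shows "unscaled P (u @ [b])"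
  unfolding unscaled_def
proof (intro allI impI)
  fix w :: "bool list"
  assume w: "length w = rounds P - length (u @ [b])"
  define k where "k = rounds P - length u - 1"
  have "rounds P - length u = Suc k"
    using assms(2) k_def by simp
  then have "mdomA P (u @ b # w) = mdomk P (Suc k) u (u @ b # w)"
    using assms(1) w unfolding unscaled_def by simp
  also have "\<dots> = mdomk P k (u @ [b]) ((u @ [b]) @ w)"
    unfolding mdomk_Suc_factor using assms(3) k_def by simp
  finally show "mdomA P ((u @ [b]) @ w) =
      mdomk P (rounds P - length (u @ [b])) (u @ [b]) ((u @ [b]) @ w)"
    using k_def by simp
qed

lemma exp_at_mdomA_unscaled:
  "unscaled P u \<Longrightarrow> 0 < visit P u \<Longrightarrow> exp_at P u (mdomA P) = node_mass P u"
  unfolding unscaled_def exp_at_def exp_from_def node_mass_def by (auto intro!: sum.cong)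

lemma cond_proto_simps [simp]:
  "rounds (cond_proto P M) = rounds P" "ctrl (cond_proto P M) = ctrl P"
  "out (cond_proto P M) = out P"
  by (simp_all add: cond_proto_def)

lemma edge_cond_proto:
  "edge (cond_proto P M) u b = (if exp_at P u M = 1 then 0
     else edge P u b * (1 - exp_at P (u @ [b]) M) / (1 - exp_at P u M))"
  by (simp add: cond_proto_def)

lemma edge_cond_proto_nonneg:
  assumes "wf_proto P" and "\<And>l. M l \<le> 1" and "length u < rounds P"
  shows "0 \<le> edge (cond_proto P M) u b"
proof -
  have "exp_at P u M \<le> 1" "exp_at P (u @ [b]) M \<le> 1" "0 \<le> edge P u b"
    using exp_at_le_1[OF assms(1)] edge_nonneg[OF assms(1)] assms(2,3) by simp_all
  then show ?thesis
    unfolding edge_cond_proto by (auto intro!: divide_nonneg_pos mult_nonneg_nonneg)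
qed

lemma mdomA_le_1: "wf_proto P \<Longrightarrow> mdomA P l \<le> 1"
  using mdomA_bounds[of P l] by (cases "out P l") auto

definition on_track :: "proto \<Rightarrow> bool list \<Rightarrow> bool" where
  "on_track P u \<longleftrightarrow> unscaled P u \<and> 0 < visit P u \<and> node_mass P u < 1
     \<and> 0 < visit (cond_proto P (mdomA P)) u"

lemma on_track_Nil:
  assumes "wf_proto P" and "val P < 1"
  shows "on_track P []"
proof -
  have "visit P [] = 1" "visit (cond_proto P (mdomA P)) [] = 1"
    by (simp_all add: visit_def)
  moreover have "node_mass P [] = exp_from P [] (mdomA P)"
    using exp_at_mdomA_unscaled[OF unscaled_Nil] \<open>visit P [] = 1\<close> by (simp add: exp_at_def)
  ultimately show ?thesis
    using exp_mdomA_le_val[OF assms(1)] assms(2) unscaled_Nil unfolding on_track_def by simp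
qed

lemma on_track_snoc:
  assumes wf: "wf_proto P" and "on_track P u" and u: "length u < rounds P"
    and move: "(if ctrl P u = PA then edge (cond_proto P (mdomA P)) u b
                else of_bool (greedyB P u = b)) \<noteq> 0"
  shows "on_track P (u @ [b])"
proof -
  let ?M = "mdomA P"
  have unscaled: "unscaled P u" and visit: "0 < visit P u" and mass: "node_mass P u < 1"
    and visit': "0 < visit (cond_proto P ?M) u"
    using assms(2) unfolding on_track_def by simp_all
  have exp_u: "exp_at P u ?M = node_mass P u"
    using exp_at_mdomA_unscaled[OF unscaled visit] .
  have child: "0 < edge P u b \<and> dom_factor P (rounds P - length u - 1) u b = 1
      \<and> node_mass P (u @ [b]) < 1"
  proof (cases "ctrl P u")
    case PA
    then have "edge (cond_proto P ?M) u b \<noteq> 0"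
      using move by simp
    then have "edge P u b \<noteq> 0" and exp_ne_1: "exp_at P (u @ [b]) ?M \<noteq> 1"
      using exp_u mass by (auto simp: edge_cond_proto)
    then have pos: "0 < edge P u b"
      using edge_nonneg[OF wf u, of b] by simp
    then have factor: "dom_factor P (rounds P - length u - 1) u b = 1"
      using PA by (simp add: dom_factor_def)
    have "exp_at P (u @ [b]) ?M = node_mass P (u @ [b])"
      using exp_at_mdomA_unscaled[OF unscaled_snoc[OF unscaled u factor]] visit pos
      by (simp add: visit_snoc)
    moreover have "exp_at P (u @ [b]) ?M \<le> 1"
      using exp_at_le_1[OF wf] mdomA_le_1[OF wf] u by simp
    ultimately show ?thesis
      using pos factor exp_ne_1 by simp
  next
    case PB
    then have "b = greedyB P u"
      using move by simp
    then show ?thesis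
      using greedyB_step[OF wf u PB] mass by simp
  qed
  then have "unscaled P (u @ [b])" and visit_b: "0 < visit P (u @ [b])"
    using unscaled_snoc[OF unscaled u] visit by (simp_all add: visit_snoc)
  then have "exp_at P (u @ [b]) ?M < 1"
    using exp_at_mdomA_unscaled child by simp
  then have "0 < edge (cond_proto P ?M) u b"
    using child exp_u mass by (simp add: edge_cond_proto)
  then show ?thesis
    using \<open>unscaled P (u @ [b])\<close> visit_b child visit' unfolding on_track_def by (simp add: visit_snoc)
qed

lemma on_track_reachable:
  assumes "wf_proto P" and "val P < 1"
  shows "length u \<le> rounds P \<Longrightarrow> visitAB (cond_proto P (mdomA P)) (greedyB P) u \<noteq> 0 \<Longrightarrow>
    on_track P u"
proof (induction u rule: rev_induct)
  case Nil
  show ?case using on_track_Nil[OF assms] .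
next
  case (snoc b u)
  then show ?case
    using on_track_snoc[OF assms(1)] by (simp add: visitAB_snoc)
qed

lemma valid_greedyB:
  "wf_proto P \<Longrightarrow> val P < 1 \<Longrightarrow> valid_B (cond_proto P (mdomA P)) (greedyB P)"
  unfolding valid_B_def using on_track_reachable unfolding on_track_def by force

lemma valAB_greedyB:
  assumes "wf_proto P" and "val P < 1"
  shows "valAB (cond_proto P (mdomA P)) (greedyB P) = 0"
  unfolding valAB_def cond_proto_simps
proof (rule sum.neutral, intro ballI)
  fix l :: "bool list"
  assume "l \<in> {l. length l = rounds P}"
  then have "node_mass P l = of_bool (out P l)" and "length l \<le> rounds P"
    using node_mass_leaf by simp_all
  then show "visitAB (cond_proto P (mdomA P)) (greedyB P) l * of_bool (out P l) = 0"
    using on_track_reachable[OF assms] unfolding on_track_def by fastforce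
qed

lemma valAB_cong:
  "(\<And>u. length u < rounds P \<Longrightarrow> B u = B' u) \<Longrightarrow> valAB P B = valAB P B'"
  unfolding valAB_def visitAB_def
  by (intro sum.cong refl arg_cong2[where f = "(*)"] prod.cong) auto

lemma valAB_nonneg:
  "(\<And>u b. length u < rounds P \<Longrightarrow> 0 \<le> edge P u b) \<Longrightarrow> 0 \<le> valAB P B"
  unfolding valAB_def visitAB_def
  by (intro sum_nonneg mult_nonneg_nonneg prod_nonneg) auto

lemma BestB_eq_1I:
  assumes edge_nonneg: "\<And>u b. length u < rounds P \<Longrightarrow> 0 \<le> edge P u b"
    and "valid_B P B" and "valAB P B = 0"
  shows "BestB P = 1"
proof -
  define A where "A = {u :: bool list. length u < rounds P}"
  have "finite A"
    unfolding A_def using finite_lists_length_le[of "UNIV :: bool set" "rounds P"]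
    by (auto elim: finite_subset[rotated])
  have "1 - valAB P B' = 1 - valAB P (\<lambda>u. u \<in> {u \<in> A. B' u})" for B'
    by (rule arg_cong[OF valAB_cong]) (simp add: A_def)
  then have "{1 - valAB P B' | B'. valid_B P B'} \<subseteq> (\<lambda>X. 1 - valAB P (\<lambda>u. u \<in> X)) ` Pow A"
    by blast
  then have "finite {1 - valAB P B' | B'. valid_B P B'}"
    using \<open>finite A\<close> by (auto elim: finite_subset)
  then show ?thesis
    unfolding BestB_def using assms valAB_nonneg[OF edge_nonneg] by (intro Max_eqI) auto
qed

theorem lemma3p21:
  fixes P :: proto
  assumes "wf_proto P"
    and "val P < 1"
  shows "BestB (cond_proto P (mdomA P)) = 1"
proof (rule BestB_eq_1I)
  show "0 \<le> edge (cond_proto P (mdomA P)) u b" if "length u < rounds (cond_proto P (mdomA P))" for u b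
    using edge_cond_proto_nonneg[OF assms(1) mdomA_le_1[OF assms(1)]] that by simp
  show "valid_B (cond_proto P (mdomA P)) (greedyB P)"
    using valid_greedyB[OF assms] .
  show "valAB (cond_proto P (mdomA P)) (greedyB P) = 0"
    using valAB_greedyB[OF assms] .
qed

end
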